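(* Let $\alpha>-1$ with $\alpha\neq-\tfrac12$, $M\ge0$, and for $n=0,1,2,\ldots$ let $$P_n^{\alpha,\alpha,M,M}(x)=C_0P_n^{(\alpha,\alpha)}(x)-C_1x\frac{d}{dx}P_n^{(\alpha,\alpha)}(x),$$ where $$C_0=1+M\frac{2n}{\alpha+1}\binom{n+2\alpha+1}{n}+4M^2\binom{n+2\alpha+1}{n-1}^2,\qquad C_1=\frac{2M}{2\alpha+1}\binom{n+2\alpha}{n}+\frac{2M^2}{\alpha+1}\binom{n+2\alpha}{n-1}\binom{n+2\alpha+1}{n}.$$ Then $y=P_n^{\alpha,\alpha,M,M}$ satisfies the linear infinite order differential equation $$\sum_{i=0}^\infty b_i(x)y^{(i)}(x)=0,$$ where $b_0(x)=b_0(n,\alpha,x)=\tfrac12\big[1-(-1)^n\big]$ and $b_i(x)=\frac{2^{i-1}}{i!}(-x)^i$ for $i=1,2,3,\ldots$.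
   Context: $P_n^{(\alpha,\alpha)}(x)=\binom{n+\alpha}{n}\,{}_2F_1\!\left(\begin{matrix}-n,\;n+2\alpha+1\\ \alpha+1\end{matrix};\frac{1-x}{2}\right)$ is the classical symmetric Jacobi polynomial; $\binom{\gamma}{m}$ is the generalized binomial coefficient (zero for $m<0$). $P_n^{\alpha,\alpha,M,M}$ are Koornwinder's generalized Jacobi polynomials orthogonal on $[-1,1]$ with respect to $\frac{\Gamma(2\alpha+2)}{2^{2\alpha+1}\Gamma(\alpha+1)^2}(1-x^2)^\alpha+M\delta(x+1)+M\delta(x-1)$. The sum is finite on polynomials. *)

theory Defs
  imports Complex_Main "HOL-Computational_Algebra.Polynomial"
begin

definition gbinom :: "real \<Rightarrow> int \<Rightarrow> real" where
  "gbinom \<gamma> m = (if m < 0 then 0 else \<gamma> gchoose (nat m))"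

text \<open>Classical symmetric Jacobi polynomial
  P_n^(a,a)(x) = binom(n+a,n) * 2F1(-n, n+2a+1; a+1; (1-x)/2).\<close>
definition jacobi_sym :: "nat \<Rightarrow> real \<Rightarrow> real poly" where
  "jacobi_sym n a = smult (gbinom (real n + a) (int n))
     (\<Sum>k\<le>n. smult (pochhammer (- real n) k * pochhammer (real n + 2 * a + 1) k
                     / (pochhammer (a + 1) k * fact k))
               ([:1/2, -1/2:] ^ k))"

definition koorn_C0 :: "nat \<Rightarrow> real \<Rightarrow> real \<Rightarrow> real" where
  "koorn_C0 n a M = 1 + M * (2 * real n / (a + 1)) * gbinom (real n + 2 * a + 1) (int n)
     + 4 * M\<^sup>2 * (gbinom (real n + 2 * a + 1) (int n - 1))\<^sup>2"

definition koorn_C1 :: "nat \<Rightarrow> real \<Rightarrow> real \<Rightarrow> real" where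
  "koorn_C1 n a M = (2 * M / (2 * a + 1)) * gbinom (real n + 2 * a) (int n)
     + (2 * M\<^sup>2 / (a + 1)) * gbinom (real n + 2 * a) (int n - 1)
         * gbinom (real n + 2 * a + 1) (int n)"

definition koornwinder_sym :: "nat \<Rightarrow> real \<Rightarrow> real \<Rightarrow> real poly" where
  "koornwinder_sym n a M =
     smult (koorn_C0 n a M) (jacobi_sym n a)
     - smult (koorn_C1 n a M) ([:0, 1:] * pderiv (jacobi_sym n a))"

definition b_coeff :: "nat \<Rightarrow> nat \<Rightarrow> real \<Rightarrow> real" where
  "b_coeff n i x = (if i = 0 then (1 - (-1) ^ n) / 2
                    else 2 ^ (i - 1) / fact i * (- x) ^ i)"

end

theory Submission
  imports Defs
begin

text \<open>By Taylor's formula with step \<open>-2x\<close>, the terms \<open>i \<ge> 1\<close> of the series add up to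
  \<open>(y(-x) - y(x))/2\<close>, so the equation says exactly that \<open>y(-x) = (-1)^n y(x)\<close>.
  Koornwinder's polynomial \<open>C\<^sub>0 J - C\<^sub>1 x J'\<close> inherits this parity from the Jacobi polynomial
  \<open>J = P_n^(\<alpha>,\<alpha>)\<close>. The parity of \<open>J\<close> comes from its differential equation
  \<open>(1-x\<^sup>2) y'' - 2(\<alpha>+1) x y' + n(n+2\<alpha>+1) y = 0\<close>, which is invariant under \<open>x \<mapsto> -x\<close> and,
  for \<open>\<alpha> > -1\<close>, has no nonzero polynomial solution of degree other than \<open>n\<close>;
  but \<open>J(x) - (-1)^n J(-x)\<close> is a solution without an \<open>x^n\<close> term.\<close>

lemma higher_pderiv_eq_0:
  fixes p :: "'a::{comm_semiring_1,semiring_no_zero_divisors} poly"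
  assumes "m > degree p"
  shows "(pderiv ^^ m) p = 0"
proof (rule poly_eqI)
  fix k
  show "coeff ((pderiv ^^ m) p) k = coeff 0 k"
    using assms by (simp add: coeff_higher_pderiv coeff_eq_0)
qed

lemma poly_taylor_sums:
  fixes p :: "real poly"
  shows "(\<lambda>m. poly ((pderiv ^^ m) p) c / fact m * h ^ m) sums poly p (c + h)"
proof -
  define D where "D = Suc (degree p)"
  have "poly p (c + h) = (\<Sum>m<D. poly ((pderiv ^^ m) p) c / fact m * h ^ m)"
  proof (cases "h = 0")
    case True
    then show ?thesis by (simp add: D_def sum.lessThan_Suc_shift)
  next
    case False
    have "\<exists>t. (if c + h < c then c + h < t \<and> t < c else c < t \<and> t < c + h) \<and>
        poly p (c + h) = (\<Sum>m<D. poly ((pderiv ^^ m) p) c / fact m * (c + h - c) ^ m)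
          + poly ((pderiv ^^ D) p) t / fact D * (c + h - c) ^ D"
      by (rule Taylor[where a = "c - \<bar>h\<bar>" and b = "c + \<bar>h\<bar>"]) (use False in \<open>auto simp: D_def\<close>)
    then obtain t where "poly p (c + h) = (\<Sum>m<D. poly ((pderiv ^^ m) p) c / fact m * h ^ m)
        + poly ((pderiv ^^ D) p) t / fact D * h ^ D"
      by auto
    moreover have "(pderiv ^^ D) p = 0"
      by (rule higher_pderiv_eq_0) (simp add: D_def)
    ultimately show ?thesis by simp
  qed
  moreover have "(\<lambda>m. poly ((pderiv ^^ m) p) c / fact m * h ^ m) sums
      (\<Sum>m<D. poly ((pderiv ^^ m) p) c / fact m * h ^ m)"
    by (rule sums_finite) (auto simp: D_def higher_pderiv_eq_0)
  ultimately show ?thesis by simp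
qed

lemma b_coeff_series_sums:
  fixes y :: "real poly"
  shows "(\<lambda>i. b_coeff n i x * poly ((pderiv ^^ i) y) x) sums
           ((1 - (-1) ^ n) / 2 * poly y x + (poly y (- x) - poly y x) / 2)"
proof -
  define Y where "Y i = poly ((pderiv ^^ i) y) x" for i
  have "(\<lambda>i. Y i / fact i * (- 2 * x) ^ i) sums poly y (- x)"
    using poly_taylor_sums[of y x "- 2 * x"] by (simp add: Y_def)
  then have "(\<lambda>i. Y (Suc i) / fact (Suc i) * (- 2 * x) ^ Suc i) sums (poly y (- x) - Y 0)"
    by (subst sums_Suc_iff) simp
  then have "(\<lambda>i. Y (Suc i) / fact (Suc i) * (- 2 * x) ^ Suc i / 2) sums
      ((poly y (- x) - Y 0) / 2)"
    by (rule sums_divide)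
  moreover have "Y (Suc i) / fact (Suc i) * (- 2 * x) ^ Suc i / 2 = b_coeff n (Suc i) x * Y (Suc i)"
    for i
  proof -
    have "(- 2 * x) ^ Suc i = 2 * 2 ^ i * (- x) ^ Suc i"
      by (simp only: power_mult_distrib mult_minus_left flip: mult_minus_right) simp
    then show ?thesis by (simp add: b_coeff_def)
  qed
  ultimately have "(\<lambda>i. b_coeff n (Suc i) x * Y (Suc i)) sums ((poly y (- x) - Y 0) / 2)"
    by simp
  then have "(\<lambda>i. b_coeff n i x * Y i) sums ((poly y (- x) - Y 0) / 2 + b_coeff n 0 x * Y 0)"
    by (rule sums_Suc_iff[THEN iffD1])
  moreover have "(poly y (- x) - Y 0) / 2 + b_coeff n 0 x * Y 0
      = (1 - (-1) ^ n) / 2 * poly y x + (poly y (- x) - poly y x) / 2"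
    by (simp add: Y_def b_coeff_def algebra_simps)
  ultimately show ?thesis
    by (simp only: Y_def)
qed

definition hyp_coeff :: "nat \<Rightarrow> real \<Rightarrow> nat \<Rightarrow> real" where
  "hyp_coeff n a k = pochhammer (- real n) k * pochhammer (real n + 2 * a + 1) k
     / (pochhammer (a + 1) k * fact k)"

definition hyp_poly :: "nat \<Rightarrow> real \<Rightarrow> real poly" where
  "hyp_poly n a = (\<Sum>k\<le>n. monom (hyp_coeff n a k) k)"

lemma coeff_hyp_poly: "coeff (hyp_poly n a) k = hyp_coeff n a k"
proof (cases "k \<le> n")
  case False
  then have "pochhammer (- real n) k = 0"
    by (simp add: pochhammer_of_nat_eq_0_lemma)
  with False show ?thesis
    by (simp add: hyp_poly_def hyp_coeff_def coeff_sum coeff_monom)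
qed (simp add: hyp_poly_def coeff_sum coeff_monom)

lemma hyp_coeff_Suc:
  assumes "a > -1"
  shows "hyp_coeff n a (Suc k) * (real k + 1) * (real k + a + 1)
     = (real k - real n) * (real k + real n + 2 * a + 1) * hyp_coeff n a k"
proof -
  define P Q R where "P = pochhammer (- real n) k" and "Q = pochhammer (real n + 2 * a + 1) k"
    and "R = pochhammer (a + 1) k"
  have "R > 0"
    unfolding R_def using assms by (intro pochhammer_pos) simp
  moreover have "real k + a + 1 > 0"
    using assms by simp
  moreover have c_Suc: "hyp_coeff n a (Suc k) = P * (real k - real n) * (Q * (real k + real n + 2 * a + 1))
      / (R * (real k + a + 1) * ((real k + 1) * fact k))"
    by (simp add: hyp_coeff_def P_def Q_def R_def pochhammer_Suc fact_Suc algebra_simps)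
  moreover have c_k: "hyp_coeff n a k = P * Q / (R * fact k)"
    by (simp add: hyp_coeff_def P_def Q_def R_def)
  ultimately show ?thesis
    unfolding c_Suc c_k by (simp add: divide_simps)
qed

lemma pcompose_monom: "pcompose (monom c k) q = smult c (q ^ k)"
  by (induction k) (simp_all add: monom_0 monom_Suc pcompose_pCons pcompose_smult)

lemma jacobi_sym_eq_hyp_poly:
  "jacobi_sym n a = smult (gbinom (real n + a) (int n)) (pcompose (hyp_poly n a) [:1/2, -1/2:])"
  by (simp add: jacobi_sym_def hyp_poly_def hyp_coeff_def pcompose_sum pcompose_monom)

text \<open>Gauss's equation \<open>t(1-t) F'' + (c - (a+b+1) t) F' - ab F = 0\<close> for
  \<open>F = \<^sub>2F\<^sub>1(a, b; c; t)\<close> with \<open>a = -n\<close>, \<open>b = n+2\<alpha>+1\<close>, \<open>c = \<alpha>+1\<close>.\<close>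

lemma hyp_poly_ode:
  assumes "a > -1"
  shows "[:0, 1, -1:] * pderiv (pderiv (hyp_poly n a)) + [:a + 1, -2 * (a + 1):] * pderiv (hyp_poly n a)
           + smult (real n * (real n + 2 * a + 1)) (hyp_poly n a) = 0"
proof (rule poly_eqI)
  fix k
  show "coeff ([:0, 1, -1:] * pderiv (pderiv (hyp_poly n a)) + [:a + 1, -2 * (a + 1):] * pderiv (hyp_poly n a)
           + smult (real n * (real n + 2 * a + 1)) (hyp_poly n a)) k = coeff 0 k"
  proof (cases k)
    case 0
    then show ?thesis
      using hyp_coeff_Suc[OF assms, of n 0] by (simp add: coeff_pderiv coeff_hyp_poly algebra_simps)
  next
    case (Suc j)
    then show ?thesis
      using hyp_coeff_Suc[OF assms, of n k]
      by (cases j) (simp_all add: coeff_pderiv coeff_hyp_poly coeff_pCons algebra_simps)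
  qed
qed

definition jacobi_op :: "real \<Rightarrow> nat \<Rightarrow> real poly \<Rightarrow> real poly" where
  "jacobi_op a n q = [:1, 0, -1:] * pderiv (pderiv q) - smult (2 * (a + 1)) ([:0, 1:] * pderiv q)
     + smult (real n * (real n + 2 * a + 1)) q"

lemma jacobi_op_jacobi_sym:
  assumes "a > -1"
  shows "jacobi_op a n (jacobi_sym n a) = 0"
proof (rule poly_ext)
  fix x
  define F where "F = hyp_poly n a"
  define G where "G = gbinom (real n + a) (int n)"
  define T :: "real poly" where "T = [:1/2, -1/2:]"
  have J: "jacobi_sym n a = smult G (pcompose F T)"
    unfolding F_def G_def T_def by (rule jacobi_sym_eq_hyp_poly)
  have J': "pderiv (jacobi_sym n a) = smult (- G / 2) (pcompose (pderiv F) T)"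
    unfolding J by (simp add: pderiv_pcompose pderiv_smult T_def pderiv_pCons)
  have J'': "pderiv (pderiv (jacobi_sym n a)) = smult (G / 4) (pcompose (pderiv (pderiv F)) T)"
    unfolding J' by (simp add: pderiv_pcompose pderiv_smult pderiv_minus T_def pderiv_pCons)
  have "poly (jacobi_op a n (jacobi_sym n a)) x
      = G * poly ([:0, 1, -1:] * pderiv (pderiv F) + [:a + 1, -2 * (a + 1):] * pderiv F
           + smult (real n * (real n + 2 * a + 1)) F) ((1 - x) / 2)"
    unfolding jacobi_op_def J'' unfolding J' by (simp add: J poly_pcompose T_def field_simps)
  also have "\<dots> = 0"
    by (simp only: F_def hyp_poly_ode[OF assms] poly_0 mult_zero_right)
  finally show "poly (jacobi_op a n (jacobi_sym n a)) x = poly 0 x"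
    by simp
qed

lemma pderiv_reflect: "pderiv (pcompose q [:0, -1:]) = - pcompose (pderiv q) [:0, -1:]"
  for q :: "'a::idom poly"
  by (simp add: pderiv_pcompose pderiv_pCons)

lemma jacobi_op_reflect: "jacobi_op a n (pcompose q [:0, -1:]) = pcompose (jacobi_op a n q) [:0, -1:]"
proof (rule poly_ext)
  fix x
  show "poly (jacobi_op a n (pcompose q [:0, -1:])) x = poly (pcompose (jacobi_op a n q) [:0, -1:]) x"
    by (simp add: jacobi_op_def pderiv_reflect pderiv_minus poly_pcompose algebra_simps)
qed

lemma jacobi_op_diff_smult: "jacobi_op a n (p - smult c q) = jacobi_op a n p - smult c (jacobi_op a n q)"
proof (rule poly_ext)
  fix x
  show "poly (jacobi_op a n (p - smult c q)) x = poly (jacobi_op a n p - smult c (jacobi_op a n q)) x"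
    by (simp add: jacobi_op_def pderiv_diff pderiv_smult algebra_simps)
qed

lemma coeff_jacobi_op_degree:
  "coeff (jacobi_op a n q) (degree q)
     = (real n - real (degree q)) * (real n + real (degree q) + 2 * a + 1) * lead_coeff q"
proof -
  have "coeff (jacobi_op a n q) d = (real n - real d) * (real n + real d + 2 * a + 1) * coeff q d"
    if "degree q = d" for d
  proof -
    have above: "coeff q k = 0" if "k > d" for k
      using that \<open>degree q = d\<close> coeff_eq_0 by auto
    show ?thesis
    proof (cases d)
      case 0
      then show ?thesis using above by (simp add: jacobi_op_def coeff_pderiv algebra_simps)
    next
      case (Suc m)
      then show ?thesis using above
        by (cases m) (simp_all add: jacobi_op_def coeff_pderiv coeff_pCons algebra_simps)
    qed
  qed
  then show ?thesis by simp
qed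

lemma degree_eq_if_jacobi_op_eq_0:
  assumes "a > -1" and "jacobi_op a n q = 0" and "q \<noteq> 0"
  shows "degree q = n"
proof (rule ccontr)
  assume ne: "degree q \<noteq> n"
  then have "real n + real (degree q) + 2 * a + 1 > 0"
    using assms(1) by linarith
  moreover have "(real n - real (degree q)) * (real n + real (degree q) + 2 * a + 1) * lead_coeff q = 0"
    using coeff_jacobi_op_degree[of a n q] assms(2) by simp
  ultimately show False
    using ne assms(3) by simp
qed

lemma jacobi_sym_reflect:
  assumes "a > -1"
  shows "pcompose (jacobi_sym n a) [:0, -1:] = smult ((-1) ^ n) (jacobi_sym n a)"
proof -
  define J where "J = jacobi_sym n a"
  define q where "q = pcompose J [:0, -1:] - smult ((-1) ^ n) J"
  have "jacobi_op a n q = 0"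
    using jacobi_op_jacobi_sym[OF assms] by (simp add: q_def J_def jacobi_op_diff_smult jacobi_op_reflect)
  moreover have "coeff q n = 0"
    by (simp add: q_def coeff_pcompose_linear)
  ultimately have "q = 0"
    using degree_eq_if_jacobi_op_eq_0[OF assms] leading_coeff_0_iff by metis
  then show ?thesis
    by (simp add: q_def J_def)
qed

lemma poly_koornwinder_sym_minus:
  assumes "a > -1"
  shows "poly (koornwinder_sym n a M) (- x) = (-1) ^ n * poly (koornwinder_sym n a M) x"
proof -
  define J where "J = jacobi_sym n a"
  have R: "pcompose J [:0, -1:] = smult ((-1) ^ n) J"
    unfolding J_def by (rule jacobi_sym_reflect[OF assms])
  then have R': "- pcompose (pderiv J) [:0, -1:] = smult ((-1) ^ n) (pderiv J)"
    by (metis pderiv_reflect pderiv_smult)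
  have "poly J (- x) = (-1) ^ n * poly J x"
    using arg_cong[OF R, of "\<lambda>p. poly p x"] by (simp add: poly_pcompose)
  moreover have "poly (pderiv J) (- x) = - ((-1) ^ n * poly (pderiv J) x)"
    using arg_cong[OF R', of "\<lambda>p. poly p x"] by (simp add: poly_pcompose)
  ultimately show ?thesis
    by (simp add: koornwinder_sym_def flip: J_def) (simp add: algebra_simps)
qed

theorem mainTheorem5:
  fixes a M x :: real and n :: nat
  assumes "a > -1" and "a \<noteq> -1/2" and "M \<ge> 0"
  shows "(\<lambda>i. b_coeff n i x * poly ((pderiv ^^ i) (koornwinder_sym n a M)) x) sums 0"
proof -
  define y where "y = koornwinder_sym n a M"
  have "poly y (- x) = (-1) ^ n * poly y x"
    unfolding y_def by (rule poly_koornwinder_sym_minus[OF assms(1)])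
  then have "(1 - (-1) ^ n) / 2 * poly y x + (poly y (- x) - poly y x) / 2 = 0"
    by (simp add: field_simps)
  then show ?thesis
    using b_coeff_series_sums[of n x y] by (simp add: y_def)
qed

end
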